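(* Let $u\in\mathcal B$ and let $R'(u)=\sum_{n=0}^\infty R'_n[u]$ be the (formal) generating function, where $R'_n[u]=R'[u,\dots,u]$ ($n$ arguments). Then for every $v\in\mathcal B$, $R'(u)v=v+R'(u)\big(\gamma[u\,R'(u)(u)]\,v\big)+R'(u)\big(\Lambda(u\otimes v)\big)$, as an identity of formal series (i.e. comparing the terms of each homogeneous degree in $u$).
   Context: Let $\mathcal B$ be a unital $*$-algebra with star-linear maps $\gamma:\mathcal B\to\mathcal B$ and $\Lambda:\mathcal B\otimes_{alg}\mathcal B\to\mathcal B$. The linear operators $R'[u_1,\dots,u_k]$ on $\mathcal B$ ($k\ge0$) are defined recursively: $R'[\emptyset]=\mathrm{id}_{\mathcal B}$, and $R'[u_1,\dots,u_k]=\sum_{\pi\in\mathrm{Int}(k)}w(V_1)\circ\cdots\circ w(V_m)$, where $\mathrm{Int}(k)$ is the set of interval partitions of $\{1,\dots,k\}$, $V_1,\dots,V_m$ are the blocks of $\pi$ from left to right, $w(\{i\})$ is $v\mapsto\Lambda(u_i\otimes v)$, and for a block $V=\{p,\dots,q\}$ with $q>p$, $w(V)$ is left multiplication by $\gamma\big[u_p\,R'[u_{p+1},\dots,u_{q-1}](u_q)\big]$. *)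

theory Defs
  imports Complex_Main
begin

definition unital_star_algebra ::
  "(complex \<Rightarrow> 'b::{ring,monoid_mult} \<Rightarrow> 'b) \<Rightarrow> ('b \<Rightarrow> 'b) \<Rightarrow> bool" where
  "unital_star_algebra scale st \<longleftrightarrow>
     module scale \<and>
     (\<forall>c x y. scale c (x * y) = scale c x * y) \<and>
     (\<forall>c x y. scale c (x * y) = x * scale c y) \<and>
     (\<forall>x y. st (x + y) = st x + st y) \<and>
     (\<forall>c x. st (scale c x) = scale (cnj c) (st x)) \<and>
     (\<forall>x y. st (x * y) = st y * st x) \<and>
     (\<forall>x. st (st x) = x)"

definition star_linear ::
  "(complex \<Rightarrow> 'b::{ring,monoid_mult} \<Rightarrow> 'b) \<Rightarrow> ('b \<Rightarrow> 'b) \<Rightarrow> ('b \<Rightarrow> 'b) \<Rightarrow> bool" where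
  "star_linear scale st f \<longleftrightarrow>
     Vector_Spaces.linear scale scale f \<and> (\<forall>x. f (st x) = st (f x))"

text \<open>Star-linear map B \<otimes>_alg B \<rightarrow> B, given by its values on elementary tensors:
  a bilinear map \<Lambda>(x \<otimes> y) = L x y, compatible with the involution
  (x \<otimes> y)* = x* \<otimes> y*.\<close>
definition star_bilinear ::
  "(complex \<Rightarrow> 'b::{ring,monoid_mult} \<Rightarrow> 'b) \<Rightarrow> ('b \<Rightarrow> 'b) \<Rightarrow> ('b \<Rightarrow> 'b \<Rightarrow> 'b) \<Rightarrow> bool" where
  "star_bilinear scale st L \<longleftrightarrow>
     (\<forall>y. Vector_Spaces.linear scale scale (\<lambda>x. L x y)) \<and>
     (\<forall>x. Vector_Spaces.linear scale scale (\<lambda>y. L x y)) \<and>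
     (\<forall>x y. L (st x) (st y) = st (L x y))"

definition interval_partitions :: "'a list \<Rightarrow> 'a list list set" where
  "interval_partitions us = {ps. concat ps = us \<and> (\<forall>b\<in>set ps. b \<noteq> [])}"

lemma interval_partitions_block_length:
  "ps \<in> interval_partitions us \<Longrightarrow> b \<in> set ps \<Longrightarrow> length b \<le> length us"
proof -
  assume a: "ps \<in> interval_partitions us" "b \<in> set ps"
  then obtain xs ys where "ps = xs @ b # ys" by (meson split_list)
  with a show ?thesis unfolding interval_partitions_def by auto
qed

text \<open>The operators R'[u_1,\<dots>,u_k]; gam = \<gamma>, L x y = \<Lambda>(x \<otimes> y).\<close>
function Rp :: "('b::{ring,monoid_mult} \<Rightarrow> 'b) \<Rightarrow> ('b \<Rightarrow> 'b \<Rightarrow> 'b) \<Rightarrow> 'b list \<Rightarrow> 'b \<Rightarrow> 'b" where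
  "Rp gam L us v =
     (if us = [] then v
      else (\<Sum>ps \<in> interval_partitions us.
              foldr (\<circ>)
                (map (\<lambda>b. if length b = 1 then (\<lambda>x. L (hd b) x)
                          else (\<lambda>x. gam (hd b * Rp gam L (butlast (tl b)) (last b)) * x)) ps)
                id v))"
  by pat_completeness auto
termination
proof (relation "measure (\<lambda>(gam, L, us, v). length us)")
  show "wf (measure (\<lambda>(gam, L, us, v). length us))" by simp
next
  fix gam :: "'b::{ring,monoid_mult} \<Rightarrow> 'b" and L us v ps b
  assume "us \<noteq> []" "ps \<in> interval_partitions us" "b \<in> set ps" "length b \<noteq> 1"
  then have "length b \<le> length us" "b \<noteq> []"
    using interval_partitions_block_length[of ps us b] unfolding interval_partitions_def by auto
  then show "((gam, L, butlast (tl b), last b), gam, L, us, v)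
             \<in> measure (\<lambda>(gam, L, us, v). length us)" by (cases b) auto
qed

end

theory Submission
  imports Defs
begin

text \<open>The identity is purely combinatorial.
  Group the interval partitions of u_1 ... u_n by their last block, of length m.
  The remaining blocks form an arbitrary interval partition of the first n - m letters,
  so this part of the sum is R'[u,...,u] (n - m arguments) applied to w(last block) v.
  For m = 1 this gives the \<Lambda>-term; for m = j + 2 the last block is
  [u, u, ..., u] (j + 2 letters), and w of it is left multiplication by \<gamma>[u R'_j[u](u)].\<close>

declare Rp.simps [simp del]

definition block_op :: "('b::{ring,monoid_mult} \<Rightarrow> 'b) \<Rightarrow> ('b \<Rightarrow> 'b \<Rightarrow> 'b) \<Rightarrow> 'b list \<Rightarrow> 'b \<Rightarrow> 'b" where
  "block_op gam L b = (if length b = 1 then L (hd b)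
                       else (\<lambda>x. gam (hd b * Rp gam L (butlast (tl b)) (last b)) * x))"

lemma interval_partitions_Nil: "interval_partitions [] = {[]}"
  unfolding interval_partitions_def by auto

lemma Rp_eq_sum_interval_partitions:
  "Rp gam L us v = (\<Sum>ps \<in> interval_partitions us. foldr (\<circ>) (map (block_op gam L) ps) id v)"
proof (cases "us = []")
  case True
  then show ?thesis by (simp add: interval_partitions_Nil Rp.simps)
next
  case False
  then show ?thesis by (subst Rp.simps) (simp add: block_op_def[abs_def])
qed

lemma length_le_length_concat: "\<forall>b\<in>set bs. b \<noteq> [] \<Longrightarrow> length bs \<le> length (concat bs)"
proof (induction bs)
  case (Cons b bs)
  then show ?case by (cases b) auto
qed simp

lemma finite_interval_partitions: "finite (interval_partitions us)"
proof -
  let ?blocks = "{b. set b \<subseteq> set us \<and> length b \<le> length us}"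
  have "interval_partitions us \<subseteq> {ps. set ps \<subseteq> ?blocks \<and> length ps \<le> length us}"
    using interval_partitions_block_length length_le_length_concat
    by (fastforce simp: interval_partitions_def)
  moreover have "finite ?blocks" by (rule finite_lists_length_le) simp
  then have "finite {ps. set ps \<subseteq> ?blocks \<and> length ps \<le> length us}"
    by (rule finite_lists_length_le)
  ultimately show ?thesis by (rule finite_subset)
qed

lemma foldr_comp_id: "foldr (\<circ>) fs g = foldr (\<circ>) fs id \<circ> g"
  by (induction fs) auto

lemma Rp_last_block:
  assumes "us \<noteq> []"
  shows "Rp gam L us v =
    (\<Sum>m\<in>{1..length us}. Rp gam L (take (length us - m) us)
                            (block_op gam L (drop (length us - m) us) v))"
proof -
  let ?n = "length us"
  let ?F = "\<lambda>ps. foldr (\<circ>) (map (block_op gam L) ps) id v"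
  let ?split = "SIGMA m:{1..?n}. interval_partitions (take (?n - m) us)"
  have "Rp gam L us v = (\<Sum>ps \<in> interval_partitions us. ?F ps)"
    by (rule Rp_eq_sum_interval_partitions)
  also have "\<dots> = (\<Sum>(m, qs) \<in> ?split. ?F (qs @ [drop (?n - m) us]))"
  proof (rule sum.reindex_bij_witness
      [where i = "\<lambda>(m, qs). qs @ [drop (?n - m) us]" and j = "\<lambda>ps. (length (last ps), butlast ps)"])
    fix ps assume ps: "ps \<in> interval_partitions us"
    then have "ps \<noteq> []" using assms by (auto simp: interval_partitions_def)
    then obtain qs b where ps_eq: "ps = qs @ [b]" by (metis rev_exhaust)
    have concat_eq: "concat qs @ b = us" and "b \<noteq> []" "\<forall>c\<in>set qs. c \<noteq> []"
      using ps by (auto simp: interval_partitions_def ps_eq)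
    moreover have "take (?n - length b) us = concat qs" "drop (?n - length b) us = b"
      using concat_eq by auto
    ultimately show "(\<lambda>(m, qs). qs @ [drop (?n - m) us]) (length (last ps), butlast ps) = ps"
      and "(length (last ps), butlast ps) \<in> ?split"
      and "(\<lambda>(m, qs). ?F (qs @ [drop (?n - m) us])) (length (last ps), butlast ps) = ?F ps"
      by (auto simp: ps_eq interval_partitions_def Suc_le_eq)
  next
    fix x assume "x \<in> ?split"
    then obtain m qs where x: "x = (m, qs)" and m: "m \<in> {1..?n}"
      and qs: "qs \<in> interval_partitions (take (?n - m) us)" by auto
    show "(\<lambda>ps. (length (last ps), butlast ps)) ((\<lambda>(m, qs). qs @ [drop (?n - m) us]) x) = x"
      using m by (auto simp: x)
    show "(\<lambda>(m, qs). qs @ [drop (?n - m) us]) x \<in> interval_partitions us"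
      using m qs by (auto simp: x interval_partitions_def)
  qed
  also have "\<dots> = (\<Sum>m\<in>{1..?n}. \<Sum>qs\<in>interval_partitions (take (?n - m) us).
                   ?F (qs @ [drop (?n - m) us]))"
    by (subst sum.Sigma) (simp_all add: finite_interval_partitions split_def)
  also have "\<dots> = (\<Sum>m\<in>{1..?n}. Rp gam L (take (?n - m) us) (block_op gam L (drop (?n - m) us) v))"
    by (simp add: Rp_eq_sum_interval_partitions[where v = "block_op gam L _ v"])
      (simp add: foldr_comp_id[of _ "block_op gam L _"])
  finally show ?thesis .
qed

lemma block_op_singleton: "block_op gam L [u] = L u"
  by (simp add: block_op_def)

lemma block_op_replicate:
  assumes "2 \<le> m"
  shows "block_op gam L (replicate m u) x = gam (u * Rp gam L (replicate (m - 2) u) u) * x"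
proof -
  obtain j where "m = j + 2" using assms by (metis le_add_diff_inverse2)
  then have "replicate m u = u # replicate (m - 2) u @ [u]"
    by (simp add: replicate_append_same)
  then show ?thesis by (simp add: block_op_def)
qed

theorem theorem3p13:
  fixes scale :: "complex \<Rightarrow> 'b::{ring,monoid_mult} \<Rightarrow> 'b"
    and st :: "'b \<Rightarrow> 'b" and gam :: "'b \<Rightarrow> 'b" and L :: "'b \<Rightarrow> 'b \<Rightarrow> 'b"
    and u v :: 'b and n :: nat
  assumes "unital_star_algebra scale st"
    and "star_linear scale st gam"
    and "star_bilinear scale st L"
  shows "Rp gam L (replicate n u) v =
           (if n = 0 then v else 0)
         + (\<Sum>(k, j) \<in> {(k, j). k + j + 2 = n}.
              Rp gam L (replicate k u) (gam (u * Rp gam L (replicate j u) u) * v))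
         + (if n \<ge> 1 then Rp gam L (replicate (n - 1) u) (L u v) else 0)"
proof (cases "n = 0")
  case True
  then show ?thesis by (simp add: Rp.simps)
next
  case False
  let ?term = "\<lambda>m. Rp gam L (replicate (n - m) u) (block_op gam L (replicate m u) v)"
  have "Rp gam L (replicate n u) v = (\<Sum>m\<in>{1..n}. ?term m)"
    using False by (simp add: Rp_last_block take_replicate drop_replicate)
  also have "\<dots> = ?term 1 + (\<Sum>m\<in>{2..n}. ?term m)"
    using False by (simp add: sum.atLeast_Suc_atMost numeral_2_eq_2)
  also have "(\<Sum>m\<in>{2..n}. ?term m) = (\<Sum>(k, j) \<in> {(k, j). k + j + 2 = n}.
              Rp gam L (replicate k u) (gam (u * Rp gam L (replicate j u) u) * v))"
    by (rule sum.reindex_bij_witness[where i = "\<lambda>(k, j). j + 2" and j = "\<lambda>m. (n - m, m - 2)"])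
      (auto simp: block_op_replicate)
  finally show ?thesis
    using False by (simp add: block_op_singleton)
qed

end
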